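(* Let $N\ge1$ and $\mu\in\mathcal M_N$. (a) The map $t\mapsto R_N(t\mu)$ is nondecreasing on $[0,\infty)$. (b) Let $I_+(\mu)=\{i\in\{1,\dots,N-1\}:\mu_i<\mu_{i+1}\}=\{i_1<i_2<\dots<i_K\}$ with $K=K(\mu)$, set $i_0=0$, $i_{K+1}=N$, and $J_k=\{i_k+1,\dots,i_{k+1}\}$ for $k=0,\dots,K$. Then $$\lim_{t\to\infty}R_N(t\mu)=\sum_{k=0}^{K}r(|J_k|).$$
   Context: $\mathcal M_N=\{x\in\mathbb R^N:x_{t+1}\ge x_t\ \text{for all }t=1,\dots,N-1\}$. The monotone regression denoiser is the Euclidean projection $\eta^{mono}(y)=\arg\min_{x\in\mathcal M_N}\|y-x\|_2^2$. Its risk is $R_N(\mu)=\mathbb E\|\eta^{mono}(\mu+\mathbf Z)-\mu\|_2^2$, $\mathbf Z\sim\mathsf N(0,I_{N\times N})$, and $r(N)=R_N(0)=\mathbb E\|\eta^{mono}(\mathbf Z)\|_2^2$ (the risk at zero in dimension $N$). *)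

theory Defs
  imports "HOL-Probability.Probability"
begin

text \<open>Vectors in R^N are functions nat => real on the index set {..<N}
  (0-based: paper index i corresponds to i-1 here).\<close>

definition mono_cone :: "nat \<Rightarrow> (nat \<Rightarrow> real) set" where
  "mono_cone N = {x \<in> PiE {..<N} (\<lambda>_. UNIV). \<forall>i. Suc i < N \<longrightarrow> x i \<le> x (Suc i)}"

definition sqdist :: "nat \<Rightarrow> (nat \<Rightarrow> real) \<Rightarrow> (nat \<Rightarrow> real) \<Rightarrow> real" where
  "sqdist N x y = (\<Sum>i<N. (x i - y i)\<^sup>2)"

definition eta_mono :: "nat \<Rightarrow> (nat \<Rightarrow> real) \<Rightarrow> (nat \<Rightarrow> real)" where
  "eta_mono N y = (THE x. x \<in> mono_cone N \<and> (\<forall>z \<in> mono_cone N. sqdist N y x \<le> sqdist N y z))"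

definition gauss :: "nat \<Rightarrow> (nat \<Rightarrow> real) measure" where
  "gauss N = PiM {..<N} (\<lambda>_. density lborel (\<lambda>x. ennreal (std_normal_density x)))"

definition risk :: "nat \<Rightarrow> (nat \<Rightarrow> real) \<Rightarrow> real" where
  "risk N \<mu> = (\<integral>z. sqdist N (eta_mono N (\<lambda>i\<in>{..<N}. \<mu> i + z i)) \<mu> \<partial>gauss N)"

definition r0 :: "nat \<Rightarrow> real" where
  "r0 N = risk N (\<lambda>_. 0)"

text \<open>Paper's I_+(mu) in paper (1-based) indexing: i in {1..N-1} with mu_i < mu_(i+1).\<close>
definition Iplus :: "nat \<Rightarrow> (nat \<Rightarrow> real) \<Rightarrow> nat set" where
  "Iplus N \<mu> = {i. 1 \<le> i \<and> i \<le> N - 1 \<and> \<mu> (i - 1) < \<mu> i}"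

definition breaks :: "nat \<Rightarrow> (nat \<Rightarrow> real) \<Rightarrow> nat list" where
  "breaks N \<mu> = [0] @ sorted_list_of_set (Iplus N \<mu>) @ [N]"

end

theory Submission
  imports Defs
begin

(*
  Everything rests on the variational characterisation of the Euclidean
  projection \<eta> onto the closed convex cone M_N:  p = \<eta>(y)  iff  p \<in> M_N and
  \<langle>y - p, w - p\<rangle> \<le> 0 for all w \<in> M_N.  As M_N is a cone, this splits into
  \<langle>y - p, w\<rangle> \<le> 0 for w \<in> M_N and \<langle>y - p, p\<rangle> = 0.

  (a) The loss at noise z is |a_t|^2 with a_t = \<eta>(t\<mu> + z) - t\<mu>.  For
      0 \<le> t \<le> s the two polarity/orthogonality relations give
      |a_t| \<le> |a_s| pointwise in z; integrating gives the monotonicity.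
  (b) Cut the index range into the blocks J_k on which \<mu> is constant.  For
      fixed z and large t, t\<mu> plus the concatenation of the blockwise
      projections of z is monotone and satisfies the variational inequality,
      so it is \<eta>(t\<mu> + z).  Hence the loss is eventually the sum of the
      blockwise losses at \<mu> = 0; dominated convergence (bound |z|^2) and
      the fact that a block of a standard Gaussian vector is again standard
      Gaussian give the limit \<Sum>_k r(|J_k|).
*)

lemma sum_square_diff:
  "(\<Sum>i<N. (a i - b i)^2) = (\<Sum>i<N. (a i)^2) - 2 * (\<Sum>i<N. a i * b i) + (\<Sum>i<N. (b i)^2 :: real)"
proof -
  have "(\<Sum>i<N. (a i - b i)^2) = (\<Sum>i<N. (a i)^2 - 2 * (a i * b i) + (b i)^2)"
    by (rule sum.cong) (auto simp: power2_eq_square algebra_simps)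
  thus ?thesis by (simp add: sum.distrib sum_subtractf sum_distrib_left)
qed

lemma sum_cross_le: "2 * (\<Sum>i<N. a i * b i) \<le> (\<Sum>i<N. (a i)^2) + (\<Sum>i<N. (b i)^2 :: real)"
proof -
  have "0 \<le> (\<Sum>i<N. (a i - b i)^2)" by (simp add: sum_nonneg)
  thus ?thesis using sum_square_diff[of a b N] by simp
qed

lemma sqdist_nonneg: "0 \<le> sqdist N x y"
  unfolding sqdist_def by (simp add: sum_nonneg)

lemma mono_coneI:
  "x \<in> PiE {..<N} (\<lambda>_. UNIV) \<Longrightarrow> (\<And>i. Suc i < N \<Longrightarrow> x i \<le> x (Suc i)) \<Longrightarrow> x \<in> mono_cone N"
  unfolding mono_cone_def by auto

lemma mono_coneD: "x \<in> mono_cone N \<Longrightarrow> Suc i < N \<Longrightarrow> x i \<le> x (Suc i)"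
  unfolding mono_cone_def by auto

lemma mono_cone_eqI:
  "x \<in> mono_cone N \<Longrightarrow> y \<in> mono_cone N \<Longrightarrow> (\<And>i. i < N \<Longrightarrow> x i = y i) \<Longrightarrow> x = y"
  unfolding mono_cone_def by (rule PiE_ext) auto

lemma mono_cone_restrict:
  "(\<And>i. Suc i < N \<Longrightarrow> x i \<le> x (Suc i)) \<Longrightarrow> restrict x {..<N} \<in> mono_cone N"
  by (rule mono_coneI) auto

lemma mono_cone_comb:
  assumes "x \<in> mono_cone N" "y \<in> mono_cone N" "0 \<le> a" "0 \<le> c"
  shows "(\<lambda>i\<in>{..<N}. a * x i + c * y i) \<in> mono_cone N"
proof (rule mono_cone_restrict)
  fix i assume i: "Suc i < N"
  show "a * x i + c * y i \<le> a * x (Suc i) + c * y (Suc i)"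
    using mono_coneD[OF assms(1) i] mono_coneD[OF assms(2) i] assms(3,4)
    by (intro add_mono mult_left_mono) auto
qed

text \<open>Projection: a minimiser of the distance to y over M_N satisfies the
  variational inequality (compare with the point moved towards w).\<close>

lemma minimiser_VI:
  assumes x: "x \<in> mono_cone N" and min: "\<forall>z\<in>mono_cone N. sqdist N y x \<le> sqdist N y z"
    and w: "w \<in> mono_cone N"
  shows "(\<Sum>i<N. (y i - x i) * (w i - x i)) \<le> 0"
proof (rule ccontr)
  define A where "A = (\<Sum>i<N. (y i - x i) * (w i - x i))"
  define B where "B = (\<Sum>i<N. (w i - x i)^2)"
  assume "\<not> (\<Sum>i<N. (y i - x i) * (w i - x i)) \<le> 0"
  hence A: "A > 0" unfolding A_def by simp
  have B: "B \<ge> 0" unfolding B_def by (simp add: sum_nonneg)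
  define s where "s = A / (A + B)"
  have s0: "0 < s" and s1: "s \<le> 1" using A B unfolding s_def by auto
  define v where "v = (\<lambda>i\<in>{..<N}. (1 - s) * x i + s * w i)"
  have v: "v \<in> mono_cone N" unfolding v_def using x w s0 s1 by (intro mono_cone_comb) auto
  have "sqdist N y v = (\<Sum>i<N. (y i - x i)^2 - 2 * s * ((y i - x i) * (w i - x i)) + s^2 * (w i - x i)^2)"
    unfolding sqdist_def v_def by (rule sum.cong) (auto simp: power2_eq_square algebra_simps)
  also have "\<dots> = sqdist N y x - 2 * s * A + s^2 * B"
    unfolding sqdist_def A_def B_def by (simp add: sum.distrib sum_subtractf sum_distrib_left)
  finally have "sqdist N y x \<le> sqdist N y x - 2 * s * A + s^2 * B" using min v by auto
  hence "2 * s * A \<le> s * (s * B)" by (simp add: power2_eq_square)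
  hence "2 * A \<le> s * B" using s0 by simp
  also have "s * B \<le> A" using A B unfolding s_def by (simp add: field_simps)
  finally show False using A by simp
qed

lemma VI_unique:
  assumes x1: "x1 \<in> mono_cone N" and x2: "x2 \<in> mono_cone N"
    and v1: "(\<Sum>i<N. (y i - x1 i) * (x2 i - x1 i)) \<le> 0"
    and v2: "(\<Sum>i<N. (y i - x2 i) * (x1 i - x2 i)) \<le> 0"
  shows "x1 = x2"
proof -
  have "(\<Sum>i<N. (x2 i - x1 i)^2)
      = (\<Sum>i<N. (y i - x1 i) * (x2 i - x1 i)) + (\<Sum>i<N. (y i - x2 i) * (x1 i - x2 i))"
    unfolding sum.distrib[symmetric] by (rule sum.cong) (auto simp: power2_eq_square algebra_simps)
  hence "(\<Sum>i<N. (x2 i - x1 i)^2) = 0" using v1 v2 by (intro antisym sum_nonneg) auto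
  hence "\<forall>i\<in>{..<N}. (x2 i - x1 i)^2 = 0" by (subst (asm) sum_nonneg_eq_0_iff) auto
  thus ?thesis using x1 x2 by (intro mono_cone_eqI) auto
qed

text \<open>Parallelogram law: points of M_N that are nearly optimal are close to each
  other (their midpoint lies in M_N as well).\<close>

lemma near_optimal_close:
  assumes a: "a \<in> mono_cone N" and c: "c \<in> mono_cone N"
    and d: "\<forall>x\<in>mono_cone N. d \<le> sqdist N y x"
  shows "sqdist N a c \<le> 2 * (sqdist N y a - d) + 2 * (sqdist N y c - d)"
proof -
  define m where "m = (\<lambda>i\<in>{..<N}. (1/2) * a i + (1/2) * c i)"
  have m: "m \<in> mono_cone N" unfolding m_def using a c by (intro mono_cone_comb) auto
  have "sqdist N a c = (\<Sum>i<N. 2 * (y i - a i)^2 + 2 * (y i - c i)^2 - 4 * (y i - m i)^2)"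
    unfolding sqdist_def m_def by (rule sum.cong) (auto simp: power2_eq_square algebra_simps)
  also have "\<dots> = 2 * sqdist N y a + 2 * sqdist N y c - 4 * sqdist N y m"
    unfolding sqdist_def by (simp add: sum.distrib sum_subtractf sum_distrib_left)
  finally show ?thesis using d m by auto
qed

lemma minimising_seq_Cauchy:
  assumes X: "\<And>n. X n \<in> mono_cone N" "\<And>n. sqdist N y (X n) < d + inverse (real (Suc n))"
    and d: "\<forall>x\<in>mono_cone N. d \<le> sqdist N y x" and i: "i < N"
  shows "Cauchy (\<lambda>n. X n i)"
proof (rule CauchyI)
  fix e :: real assume e: "0 < e"
  obtain M :: nat where M: "4 / e^2 < real M" using reals_Archimedean2 by blast
  have "norm (X m i - X n i) < e" if mn: "M \<le> m" "M \<le> n" for m n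
  proof -
    have "(X m i - X n i)^2 \<le> sqdist N (X m) (X n)"
      unfolding sqdist_def using i by (intro member_le_sum) auto
    also have "\<dots> \<le> 2 * inverse (real (Suc m)) + 2 * inverse (real (Suc n))"
      using near_optimal_close[OF X(1) X(1) d, of m n] X(2)[of m] X(2)[of n] by simp
    also have "\<dots> \<le> 4 * inverse (real (Suc M))"
    proof -
      have "inverse (real (Suc m)) \<le> inverse (real (Suc M))" "inverse (real (Suc n)) \<le> inverse (real (Suc M))"
        using mn by (auto intro!: le_imp_inverse_le)
      thus ?thesis by linarith
    qed
    also have "\<dots> < e^2"
    proof -
      have "4 / e^2 < real (Suc M)" using M by simp
      hence "4 < e^2 * real (Suc M)" using e by (simp add: field_simps)
      thus ?thesis by (simp add: field_simps)
    qed
    finally have "\<bar>X m i - X n i\<bar>^2 < e^2" by simp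
    thus ?thesis using power2_less_imp_less[of "\<bar>X m i - X n i\<bar>" e] e by simp
  qed
  thus "\<exists>M. \<forall>m\<ge>M. \<forall>n\<ge>M. norm (X m i - X n i) < e" by blast
qed

text \<open>Existence of a nearest point: the coordinatewise limit of a minimising sequence.\<close>

lemma proj_exists: "\<exists>x\<in>mono_cone N. \<forall>z\<in>mono_cone N. sqdist N y x \<le> sqdist N y z"
proof -
  let ?S = "(\<lambda>x. sqdist N y x) ` mono_cone N"
  define d where "d = Inf ?S"
  have ne: "restrict (\<lambda>_. 0) {..<N} \<in> mono_cone N" by (rule mono_cone_restrict) auto
  have d: "\<forall>x\<in>mono_cone N. d \<le> sqdist N y x"
    unfolding d_def by (auto intro!: cInf_lower bdd_belowI[of _ 0] simp: sqdist_nonneg)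
  have "\<exists>x\<in>mono_cone N. sqdist N y x < d + inverse (real (Suc n))" for n
    using cInf_lessD[of ?S "d + inverse (real (Suc n))"] ne unfolding d_def by auto
  then obtain X where X: "\<And>n. X n \<in> mono_cone N" "\<And>n. sqdist N y (X n) < d + inverse (real (Suc n))"
    by metis
  define x where "x = (\<lambda>i\<in>{..<N}. lim (\<lambda>n. X n i))"
  have lim: "(\<lambda>n. X n i) \<longlonglongrightarrow> x i" if "i < N" for i
    using minimising_seq_Cauchy[OF X d that] that
    unfolding x_def by (simp add: Cauchy_convergent_iff convergent_LIMSEQ_iff)
  have xK: "x \<in> mono_cone N"
  proof (rule mono_coneI)
    show "x \<in> PiE {..<N} (\<lambda>_. UNIV)" unfolding x_def by simp
    fix i assume i: "Suc i < N"
    show "x i \<le> x (Suc i)"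
      by (rule LIMSEQ_le[OF lim lim]) (use i mono_coneD[OF X(1) i] in auto)
  qed
  have "(\<lambda>n. sqdist N y (X n)) \<longlonglongrightarrow> sqdist N y x"
    unfolding sqdist_def by (intro tendsto_sum tendsto_intros lim) auto
  moreover have "(\<lambda>n. sqdist N y (X n)) \<longlonglongrightarrow> d"
  proof (rule tendsto_sandwich[of "\<lambda>_. d" _ _ "\<lambda>n. d + inverse (real (Suc n))"])
    show "\<forall>\<^sub>F n in sequentially. d \<le> sqdist N y (X n)" using d X(1) by auto
    show "\<forall>\<^sub>F n in sequentially. sqdist N y (X n) \<le> d + inverse (real (Suc n))"
      using X(2) by (intro always_eventually allI less_imp_le) blast
  qed (simp, rule LIMSEQ_inverse_real_of_nat_add)
  ultimately have "sqdist N y x = d" by (rule LIMSEQ_unique)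
  thus ?thesis using xK d by auto
qed

lemma eta_mono_minimises:
  "eta_mono N y \<in> mono_cone N \<and> (\<forall>z\<in>mono_cone N. sqdist N y (eta_mono N y) \<le> sqdist N y z)"
proof -
  have "\<exists>!x. x \<in> mono_cone N \<and> (\<forall>z\<in>mono_cone N. sqdist N y x \<le> sqdist N y z)"
  proof (rule ex_ex1I)
    show "\<exists>x. x \<in> mono_cone N \<and> (\<forall>z\<in>mono_cone N. sqdist N y x \<le> sqdist N y z)"
      using proj_exists by blast
  next
    fix x1 x2
    assume "x1 \<in> mono_cone N \<and> (\<forall>z\<in>mono_cone N. sqdist N y x1 \<le> sqdist N y z)"
      and "x2 \<in> mono_cone N \<and> (\<forall>z\<in>mono_cone N. sqdist N y x2 \<le> sqdist N y z)"
    thus "x1 = x2" by (intro VI_unique[of x1 N x2 y] minimiser_VI) auto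
  qed
  thus ?thesis unfolding eta_mono_def by (rule theI')
qed

lemma eta_in: "eta_mono N y \<in> mono_cone N"
  using eta_mono_minimises by blast

lemma eta_VI:
  "w \<in> mono_cone N \<Longrightarrow> (\<Sum>i<N. (y i - eta_mono N y i) * (w i - eta_mono N y i)) \<le> 0"
  using eta_mono_minimises minimiser_VI by blast

lemma eta_eqI:
  assumes "x \<in> mono_cone N" "\<And>w. w \<in> mono_cone N \<Longrightarrow> (\<Sum>i<N. (y i - x i) * (w i - x i)) \<le> 0"
  shows "eta_mono N y = x"
  using VI_unique[OF eta_in assms(1) eta_VI[OF assms(1)] assms(2)[OF eta_in]] .

text \<open>Because M_N is a cone, the residual y - \<eta>(y) lies in the polar cone and is
  orthogonal to \<eta>(y) (test the inequality with w + \<eta>(y), 0 and 2\<eta>(y)).\<close>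

lemma eta_residual_polar:
  assumes w: "w \<in> mono_cone N"
  shows "(\<Sum>i<N. (y i - eta_mono N y i) * w i) \<le> 0"
proof -
  let ?p = "eta_mono N y"
  have "(\<lambda>i\<in>{..<N}. 1 * w i + 1 * ?p i) \<in> mono_cone N" using w eta_in by (intro mono_cone_comb) auto
  from eta_VI[OF this, where y=y] show ?thesis by (simp add: algebra_simps)
qed

lemma eta_residual_orth: "(\<Sum>i<N. (y i - eta_mono N y i) * eta_mono N y i) = 0"
proof -
  let ?p = "eta_mono N y"
  have "(\<lambda>i\<in>{..<N}. 0 * ?p i + 0 * ?p i) \<in> mono_cone N" by (intro mono_cone_comb eta_in) auto
  from eta_VI[OF this, where y=y] have "0 \<le> (\<Sum>i<N. (y i - ?p i) * ?p i)" by (simp add: sum_negf)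
  moreover have "(\<lambda>i\<in>{..<N}. 2 * ?p i + 0 * ?p i) \<in> mono_cone N" by (intro mono_cone_comb eta_in) auto
  from eta_VI[OF this, where y=y] have "(\<Sum>i<N. (y i - ?p i) * ?p i) \<le> 0" by (simp add: algebra_simps)
  ultimately show ?thesis by simp
qed

lemma eta_nonexpansive: "sqdist N (eta_mono N y) (eta_mono N y') \<le> sqdist N y y'"
proof -
  define p where "p = eta_mono N y"
  define q where "q = eta_mono N y'"
  define D where "D = (\<Sum>i<N. (p i - q i)^2)"
  define E where "E = (\<Sum>i<N. (y i - y' i)^2)"
  define X where "X = (\<Sum>i<N. (p i - q i) * (y i - y' i))"
  have "(\<Sum>i<N. (y i - p i) * (q i - p i)) + (\<Sum>i<N. (y' i - q i) * (p i - q i)) = D - X"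
    unfolding D_def X_def sum.distrib[symmetric] sum_subtractf[symmetric]
    by (rule sum.cong) (auto simp: power2_eq_square algebra_simps)
  moreover have "(\<Sum>i<N. (y i - p i) * (q i - p i)) \<le> 0" "(\<Sum>i<N. (y' i - q i) * (p i - q i)) \<le> 0"
    unfolding p_def q_def by (auto intro: eta_VI eta_in)
  moreover have "2 * X \<le> D + E"
    using sum_cross_le[of "\<lambda>i. p i - q i" "\<lambda>i. y i - y' i" N] unfolding D_def E_def X_def .
  ultimately have "D \<le> E" by simp
  thus ?thesis unfolding D_def E_def sqdist_def p_def q_def .
qed


definition loss :: "nat \<Rightarrow> (nat \<Rightarrow> real) \<Rightarrow> (nat \<Rightarrow> real) \<Rightarrow> real" where
  "loss N \<nu> z = sqdist N (eta_mono N (\<lambda>i\<in>{..<N}. \<nu> i + z i)) \<nu>"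

lemma risk_loss: "risk N \<nu> = integral\<^sup>L (gauss N) (loss N \<nu>)"
  unfolding risk_def loss_def ..

lemma loss_nonneg: "0 \<le> loss N \<nu> z"
  unfolding loss_def by (rule sqdist_nonneg)

text \<open>For \<nu> \<in> M_N the loss is at most |z|^2: the variational inequality tested at
  \<nu> gives |a|^2 \<le> \<langle>z, a\<rangle> for a = \<eta>(\<nu> + z) - \<nu>.\<close>

lemma loss_le_noise:
  assumes mono: "\<And>i. Suc i < N \<Longrightarrow> \<nu> i \<le> \<nu> (Suc i)"
  shows "loss N \<nu> z \<le> (\<Sum>i<N. (z i)^2)"
proof -
  define y where "y = (\<lambda>i\<in>{..<N}. \<nu> i + z i)"
  define a where "a = (\<lambda>i. eta_mono N y i - \<nu> i)"
  have "(\<Sum>i<N. (y i - eta_mono N y i) * (restrict \<nu> {..<N} i - eta_mono N y i)) \<le> 0"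
    using mono by (intro eta_VI mono_cone_restrict)
  also have "(\<Sum>i<N. (y i - eta_mono N y i) * (restrict \<nu> {..<N} i - eta_mono N y i))
      = (\<Sum>i<N. (a i)^2) - (\<Sum>i<N. z i * a i)"
    unfolding y_def a_def sum_subtractf[symmetric]
    by (rule sum.cong) (auto simp: power2_eq_square algebra_simps)
  finally have "2 * (\<Sum>i<N. (a i)^2) \<le> 2 * (\<Sum>i<N. z i * a i)" by simp
  also have "\<dots> \<le> (\<Sum>i<N. (z i)^2) + (\<Sum>i<N. (a i)^2)" by (rule sum_cross_le)
  finally have "(\<Sum>i<N. (a i)^2) \<le> (\<Sum>i<N. (z i)^2)" by simp
  moreover have "loss N \<nu> z = (\<Sum>i<N. (a i)^2)"
    unfolding loss_def sqdist_def a_def y_def by (rule sum.cong) (auto simp: power2_eq_square)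
  ultimately show ?thesis by simp
qed

text \<open>With p = \<eta>(t\<mu> + z), q = \<eta>(s\<mu> + z), a = p - t\<mu>, b = q - s\<mu> and l = t/s, the
  polarity and orthogonality of both residuals give \<langle>b - a, l b - a\<rangle> \<le> 0,
  which together with 2\<langle>a, b\<rangle> \<le> |a|^2 + |b|^2 yields |a| \<le> |b|.\<close>

lemma loss_ray_mono:
  assumes t: "0 \<le> t" and ts: "t < s"
  shows "loss N (\<lambda>i. t * \<mu> i) z \<le> loss N (\<lambda>i. s * \<mu> i) z"
proof -
  have s0: "0 < s" using t ts by simp
  define l where "l = t / s"
  have l0: "0 \<le> l" and l1: "l < 1" and t_eq: "t = l * s" using t ts s0 unfolding l_def by auto
  define yt where "yt = (\<lambda>i\<in>{..<N}. t * \<mu> i + z i)"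
  define ys where "ys = (\<lambda>i\<in>{..<N}. s * \<mu> i + z i)"
  define p where "p = eta_mono N yt"
  define q where "q = eta_mono N ys"
  define a where "a = (\<lambda>i. p i - t * \<mu> i)"
  define b where "b = (\<lambda>i. q i - s * \<mu> i)"
  define A where "A = (\<Sum>i<N. (a i)^2)"
  define B where "B = (\<Sum>i<N. (b i)^2)"
  define C where "C = (\<Sum>i<N. a i * b i)"
  have polar: "(\<Sum>i<N. (yt i - p i) * q i) \<le> 0" "(\<Sum>i<N. (ys i - q i) * p i) \<le> 0"
    unfolding p_def q_def by (auto intro: eta_residual_polar eta_in)
  have orth: "(\<Sum>i<N. (yt i - p i) * p i) = 0" "(\<Sum>i<N. (ys i - q i) * q i) = 0"
    unfolding p_def q_def by (rule eta_residual_orth)+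
  have "(\<Sum>i<N. (b i - a i) * (l * b i - a i))
      = l * (\<Sum>i<N. (yt i - p i) * q i) - (\<Sum>i<N. (yt i - p i) * p i)
        + (\<Sum>i<N. (ys i - q i) * p i) - l * (\<Sum>i<N. (ys i - q i) * q i)"
    unfolding sum_distrib_left sum_subtractf[symmetric] sum.distrib[symmetric]
    by (rule sum.cong) (auto simp: yt_def ys_def a_def b_def t_eq algebra_simps)
  also have "\<dots> \<le> 0" using mult_nonneg_nonpos[OF l0 polar(1)] polar(2) orth by simp
  also have "(\<Sum>i<N. (b i - a i) * (l * b i - a i)) = l * B - (1 + l) * C + A"
    unfolding A_def B_def C_def sum_distrib_left
    by (simp add: sum.distrib sum_subtractf algebra_simps power2_eq_square flip: sum_distrib_left)
  finally have "A + l * B \<le> (1 + l) * C" by simp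
  moreover have "(1 + l) * (2 * C) \<le> (1 + l) * (A + B)"
    using sum_cross_le[of a b N] l0 unfolding A_def B_def C_def by (intro mult_left_mono) auto
  ultimately have "(1 - l) * A \<le> (1 - l) * B" by (simp add: algebra_simps)
  hence "A \<le> B" using l1 by simp
  moreover have "loss N (\<lambda>i. t * \<mu> i) z = A" "loss N (\<lambda>i. s * \<mu> i) z = B"
    unfolding loss_def sqdist_def A_def B_def a_def b_def p_def q_def yt_def ys_def
    by (auto intro!: sum.cong simp: power2_eq_square)
  ultimately show ?thesis by simp
qed

text \<open>Measurability: the loss is continuous in z, since \<eta> is nonexpansive.\<close>

lemma coord_tendsto: "(u \<longlongrightarrow> (a::nat \<Rightarrow> real)) F \<Longrightarrow> ((\<lambda>n. u n i) \<longlongrightarrow> a i) F"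
  by (rule continuous_on_tendsto_compose[OF continuous_on_product_coordinates]) auto

lemma loss_continuous: "continuous_on UNIV (loss N \<nu>)"
proof (rule continuous_on_sequentiallyI)
  fix u :: "nat \<Rightarrow> nat \<Rightarrow> real" and a :: "nat \<Rightarrow> real"
  assume ua: "u \<longlonglongrightarrow> a"
  define Y where "Y = (\<lambda>z::nat\<Rightarrow>real. \<lambda>i\<in>{..<N}. \<nu> i + z i)"
  have s0: "(\<lambda>n. sqdist N (Y (u n)) (Y a)) \<longlonglongrightarrow> 0"
  proof -
    have "(\<lambda>n. \<Sum>i<N. (u n i - a i)^2) \<longlonglongrightarrow> (\<Sum>i<N. (a i - a i)^2)"
      by (intro tendsto_sum tendsto_intros coord_tendsto[OF ua])
    moreover have "(\<lambda>n. sqdist N (Y (u n)) (Y a)) = (\<lambda>n. \<Sum>i<N. (u n i - a i)^2)"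
      unfolding sqdist_def Y_def by (intro ext sum.cong) auto
    ultimately show ?thesis by simp
  qed
  have eta_conv: "(\<lambda>n. eta_mono N (Y (u n)) i) \<longlonglongrightarrow> eta_mono N (Y a) i" if i: "i < N" for i
  proof (rule LIM_zero_cancel, rule Lim_null_comparison)
    show "(\<lambda>n. sqrt (sqdist N (Y (u n)) (Y a))) \<longlonglongrightarrow> 0" using tendsto_real_sqrt[OF s0] by simp
    have "(eta_mono N (Y (u n)) i - eta_mono N (Y a) i)^2 \<le> sqdist N (Y (u n)) (Y a)" for n
    proof -
      have "(eta_mono N (Y (u n)) i - eta_mono N (Y a) i)^2 \<le> sqdist N (eta_mono N (Y (u n))) (eta_mono N (Y a))"
        unfolding sqdist_def using i by (intro member_le_sum) auto
      also have "\<dots> \<le> sqdist N (Y (u n)) (Y a)" by (rule eta_nonexpansive)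
      finally show ?thesis .
    qed
    thus "\<forall>\<^sub>F n in sequentially. norm (eta_mono N (Y (u n)) i - eta_mono N (Y a) i) \<le> sqrt (sqdist N (Y (u n)) (Y a))"
      by (intro always_eventually allI) (simp add: real_le_rsqrt)
  qed
  have "(\<lambda>n. \<Sum>i<N. (eta_mono N (Y (u n)) i - \<nu> i)^2) \<longlonglongrightarrow> (\<Sum>i<N. (eta_mono N (Y a) i - \<nu> i)^2)"
    by (intro tendsto_sum tendsto_intros eta_conv) auto
  thus "(\<lambda>n. loss N \<nu> (u n)) \<longlonglongrightarrow> loss N \<nu> a" unfolding loss_def sqdist_def Y_def .
qed

abbreviation gauss1 :: "real measure" where
  "gauss1 \<equiv> density lborel (\<lambda>x. ennreal (std_normal_density x))"

lemma prob_space_gauss1: "prob_space gauss1"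
  by (rule prob_space_normal_density) simp

lemma gauss_component_measurable: "i < N \<Longrightarrow> (\<lambda>x. x i) \<in> borel_measurable (gauss N)"
  unfolding gauss_def
  by (subst measurable_cong_sets[of _ _ gauss1 borel, symmetric]) (auto intro: measurable_component_singleton)

lemma loss_restrict: "loss N \<nu> (restrict z {..<N}) = loss N \<nu> z"
  unfolding loss_def by (rule arg_cong[where f="\<lambda>y. sqdist N (eta_mono N y) \<nu>"]) auto

lemma loss_measurable: "loss N \<nu> \<in> borel_measurable (gauss N)"
proof -
  have "(\<lambda>z. restrict z {..<N}) \<in> borel_measurable (gauss N)"
  proof (rule measurable_coordinatewise_then_product)
    fix i
    show "(\<lambda>z. restrict z {..<N} i) \<in> borel_measurable (gauss N)"
      by (cases "i < N") (auto simp: gauss_component_measurable)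
  qed
  hence "(\<lambda>z. loss N \<nu> (restrict z {..<N})) \<in> borel_measurable (gauss N)"
    by (rule measurable_compose[OF _ borel_measurable_continuous_onI[OF loss_continuous]])
  thus ?thesis by (simp add: loss_restrict)
qed

text \<open>Integrability, via the bound |z|^2 which has finite Gaussian mean.\<close>

lemma sumsq_integrable: "integrable (gauss N) (\<lambda>z. \<Sum>i<N. (z i)^2)"
proof (rule Bochner_Integration.integrable_sum)
  fix i assume "i \<in> {..<N}"
  hence i: "i < N" by simp
  have "distr (gauss N) gauss1 (\<lambda>\<omega>. \<omega> i) = gauss1"
    unfolding gauss_def using i prob_space_gauss1 by (intro distr_PiM_component) auto
  moreover have "integrable gauss1 (\<lambda>x. x^2)" by (rule integrable_std_normal_distribution_moment)
  ultimately have "integrable (distr (gauss N) gauss1 (\<lambda>\<omega>. \<omega> i)) (\<lambda>x. x^2)" by simp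
  thus "integrable (gauss N) (\<lambda>z. (z i)^2)"
    by (subst (asm) integrable_distr_eq)
       (auto simp: gauss_def[symmetric] intro!: gauss_component_measurable measurable_component_singleton i)
qed

lemma loss_integrable:
  assumes "\<And>i. Suc i < N \<Longrightarrow> \<nu> i \<le> \<nu> (Suc i)"
  shows "integrable (gauss N) (loss N \<nu>)"
proof (rule Bochner_Integration.integrable_bound[OF sumsq_integrable loss_measurable])
  show "AE z in gauss N. norm (loss N \<nu> z) \<le> norm (\<Sum>i<N. (z i)^2)"
    using loss_le_noise[of N \<nu>, OF assms] loss_nonneg by (intro AE_I2) (simp add: sum_nonneg)
qed

lemma risk_ray_mono:
  assumes mono: "\<And>i. Suc i < N \<Longrightarrow> \<mu> i \<le> \<mu> (Suc i)"
  shows "mono_on {0..} (\<lambda>t::real. risk N (\<lambda>i. t * \<mu> i))"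
proof (rule mono_onI)
  fix t s :: real assume t: "t \<in> {0..}" and s: "s \<in> {0..}" and ts: "t \<le> s"
  have ray_mono: "\<And>i. Suc i < N \<Longrightarrow> c * \<mu> i \<le> c * \<mu> (Suc i)" if "0 \<le> c" for c :: real
    using mono that by (simp add: mult_left_mono)
  have "loss N (\<lambda>i. t * \<mu> i) z \<le> loss N (\<lambda>i. s * \<mu> i) z" for z
    using loss_ray_mono[of t s] t ts by (cases "t = s") auto
  thus "risk N (\<lambda>i. t * \<mu> i) \<le> risk N (\<lambda>i. s * \<mu> i)"
    unfolding risk_loss using t s
    by (intro integral_mono loss_integrable ray_mono) auto
qed


locale blocks =
  fixes N :: nat and \<mu> :: "nat \<Rightarrow> real" and K :: nat and b :: "nat \<Rightarrow> nat"
  assumes mu_mono: "\<And>i. Suc i < N \<Longrightarrow> \<mu> i \<le> \<mu> (Suc i)"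
    and b_first: "b 0 = 0" and b_last: "b (Suc K) = N"
    and b_step: "\<And>k. k \<le> K \<Longrightarrow> b k < b (Suc k)"
    and mu_flat: "\<And>k i. k \<le> K \<Longrightarrow> b k \<le> i \<Longrightarrow> Suc i < b (Suc k) \<Longrightarrow> \<mu> i = \<mu> (Suc i)"
    and mu_jump: "\<And>k. k < K \<Longrightarrow> \<mu> (b (Suc k) - 1) < \<mu> (b (Suc k))"
begin

definition blen :: "nat \<Rightarrow> nat" where
  "blen k = b (Suc k) - b k"

definition block_noise :: "nat \<Rightarrow> (nat \<Rightarrow> real) \<Rightarrow> (nat \<Rightarrow> real)" where
  "block_noise k z = (\<lambda>j\<in>{..<blen k}. z (b k + j))"

definition block_eta :: "nat \<Rightarrow> (nat \<Rightarrow> real) \<Rightarrow> (nat \<Rightarrow> real)" where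
  "block_eta k z = eta_mono (blen k) (block_noise k z)"

definition block_fit :: "(nat \<Rightarrow> real) \<Rightarrow> nat \<Rightarrow> real" where
  "block_fit z i = (\<Sum>k\<le>K. if b k \<le> i \<and> i < b (Suc k) then block_eta k z (i - b k) else 0)"

definition block_loss :: "(nat \<Rightarrow> real) \<Rightarrow> real" where
  "block_loss z = (\<Sum>k\<le>K. loss (blen k) (\<lambda>_. 0) (block_noise k z))"

lemma b_strict: "k < k' \<Longrightarrow> k' \<le> Suc K \<Longrightarrow> b k < b k'"
proof (induction k')
  case (Suc k')
  hence "b k' < b (Suc k')" by (intro b_step) auto
  thus ?case using Suc by (cases "k = k'") auto
qed simp

lemma in_block: "k \<le> K \<Longrightarrow> j < blen k \<Longrightarrow> b k + j < b (Suc k)"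
  unfolding blen_def by simp

lemma in_block_N: "k \<le> K \<Longrightarrow> j < blen k \<Longrightarrow> b k + j < N"
  using in_block b_strict[of "Suc k" "Suc K"] b_last by (cases "k = K") fastforce+

lemma block_of:
  assumes "i < N" shows "\<exists>k\<le>K. b k \<le> i \<and> i < b (Suc k)"
proof -
  define k where "k = Max {k. k \<le> K \<and> b k \<le> i}"
  have fin: "finite {k. k \<le> K \<and> b k \<le> i}" by simp
  have "0 \<in> {k. k \<le> K \<and> b k \<le> i}" using b_first by simp
  hence "k \<in> {k. k \<le> K \<and> b k \<le> i}" unfolding k_def by (intro Max_in[OF fin]) auto
  hence k: "k \<le> K" "b k \<le> i" by auto
  have "i < b (Suc k)"
  proof (rule ccontr)
    assume "\<not> i < b (Suc k)"
    moreover have "k \<noteq> K" using calculation b_last assms by auto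
    ultimately have "Suc k \<le> k" unfolding k_def using k by (intro Max_ge[OF fin]) (auto simp: k_def)
    thus False by simp
  qed
  thus ?thesis using k by auto
qed

lemma block_unique:
  assumes "k \<le> K" "k' \<le> K" "b k \<le> i" "i < b (Suc k)" "b k' \<le> i" "i < b (Suc k')"
  shows "k = k'"
proof (rule ccontr)
  assume "k \<noteq> k'"
  hence "Suc k \<le> k' \<or> Suc k' \<le> k" by auto
  thus False
    using b_strict[of "Suc k" k'] b_strict[of "Suc k'" k] assms by (auto simp: le_less)
qed

lemma sum_blocks: "(\<Sum>i<N. f i) = (\<Sum>k\<le>K. \<Sum>j<blen k. (f (b k + j) :: real))"
proof -
  have "(\<Sum>i<b (Suc m). f i) = (\<Sum>k\<le>m. \<Sum>j<blen k. f (b k + j))" if "m \<le> K" for m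
    using that
  proof (induction m)
    case 0
    show ?case using b_first by (simp add: blen_def)
  next
    case (Suc m)
    have lt: "b (Suc m) < b (Suc (Suc m))" using Suc.prems by (intro b_step) auto
    have "(\<Sum>i<b (Suc (Suc m)). f i) = (\<Sum>i<b (Suc m). f i) + (\<Sum>i\<in>{b (Suc m)..<b (Suc (Suc m))}. f i)"
      using lt by (simp add: sum.atLeastLessThan_concat[symmetric] atLeast0LessThan[symmetric])
    also have "(\<Sum>i\<in>{b (Suc m)..<b (Suc (Suc m))}. f i) = (\<Sum>j<blen (Suc m). f (b (Suc m) + j))"
      using sum.shift_bounds_nat_ivl[of f 0 "b (Suc m)" "blen (Suc m)"] lt
      by (simp add: blen_def atLeast0LessThan add.commute)
    finally show ?case using Suc by simp
  qed
  from this[of K] show ?thesis using b_last by simp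
qed

lemma mu_const: "k \<le> K \<Longrightarrow> j < blen k \<Longrightarrow> \<mu> (b k + j) = \<mu> (b k)"
proof (induction j)
  case (Suc j)
  have "\<mu> (b k + j) = \<mu> (Suc (b k + j))"
    using Suc.prems in_block[of k "Suc j"] by (intro mu_flat[of k]) auto
  thus ?case using Suc by simp
qed simp

lemma block_fit_nth:
  assumes k: "k \<le> K" and j: "j < blen k"
  shows "block_fit z (b k + j) = block_eta k z j"
proof -
  have "block_fit z (b k + j) = (\<Sum>k'\<le>K. if k' = k then block_eta k z j else 0)"
    unfolding block_fit_def
    using block_unique[of k _ "b k + j"] k in_block[OF k j] by (intro sum.cong) auto
  thus ?thesis using k by simp
qed

lemma loss_block_noise: "loss (blen k) (\<lambda>_. 0) (block_noise k z) = (\<Sum>j<blen k. (block_eta k z j)^2)"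
proof -
  have "(\<lambda>j\<in>{..<blen k}. 0 + block_noise k z j) = block_noise k z"
    by (rule ext) (simp add: block_noise_def)
  thus ?thesis unfolding loss_def sqdist_def block_eta_def by simp
qed

lemma block_eta_in: "block_eta k z \<in> mono_cone (blen k)"
  unfolding block_eta_def by (rule eta_in)

text \<open>The candidate t\<mu> + block_fit z satisfies the variational inequality for
  every t: blockwise it is the variational inequality of the block projection,
  since t\<mu> is constant on each block.\<close>

lemma block_fit_VI:
  assumes w: "w \<in> mono_cone N"
  shows "(\<Sum>i<N. ((\<lambda>i\<in>{..<N}. t * \<mu> i + z i) i - (\<lambda>i\<in>{..<N}. t * \<mu> i + block_fit z i) i)
                * (w i - (\<lambda>i\<in>{..<N}. t * \<mu> i + block_fit z i) i)) \<le> 0"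
proof -
  have "(\<Sum>i<N. ((\<lambda>i\<in>{..<N}. t * \<mu> i + z i) i - (\<lambda>i\<in>{..<N}. t * \<mu> i + block_fit z i) i)
                * (w i - (\<lambda>i\<in>{..<N}. t * \<mu> i + block_fit z i) i))
      = (\<Sum>k\<le>K. \<Sum>j<blen k. (z (b k + j) - block_fit z (b k + j))
                             * (w (b k + j) - t * \<mu> (b k + j) - block_fit z (b k + j)))"
    by (subst sum_blocks[symmetric]) (auto intro!: sum.cong)
  also have "\<dots> \<le> 0"
  proof (rule sum_nonpos)
    fix k assume "k \<in> {..K}"
    hence k: "k \<le> K" by simp
    define w' where "w' = (\<lambda>j\<in>{..<blen k}. w (b k + j) - t * \<mu> (b k))"
    have w': "w' \<in> mono_cone (blen k)"
      unfolding w'_def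
    proof (rule mono_cone_restrict)
      fix j assume "Suc j < blen k"
      hence "Suc (b k + j) < N" using in_block_N[OF k, of "Suc j"] by simp
      thus "w (b k + j) - t * \<mu> (b k) \<le> w (b k + Suc j) - t * \<mu> (b k)"
        using mono_coneD[OF w] by simp
    qed
    have "(\<Sum>j<blen k. (z (b k + j) - block_fit z (b k + j))
                      * (w (b k + j) - t * \<mu> (b k + j) - block_fit z (b k + j)))
        = (\<Sum>j<blen k. (block_noise k z j - block_eta k z j) * (w' j - block_eta k z j))"
      using k by (intro sum.cong) (auto simp: block_noise_def w'_def block_fit_nth mu_const)
    also have "\<dots> \<le> 0" unfolding block_eta_def by (rule eta_VI[OF w'])
    finally show "(\<Sum>j<blen k. (z (b k + j) - block_fit z (b k + j))
                      * (w (b k + j) - t * \<mu> (b k + j) - block_fit z (b k + j))) \<le> 0" .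
  qed
  finally show ?thesis .
qed

text \<open>The candidate is monotone as soon as t is so large that each jump of t\<mu>
  dominates the possible decrease of block_fit z across the breakpoint.\<close>

definition jumps_dominate :: "(nat \<Rightarrow> real) \<Rightarrow> real \<Rightarrow> bool" where
  "jumps_dominate z t \<longleftrightarrow> (\<forall>k\<in>{..<K}. block_fit z (b (Suc k) - 1) - block_fit z (b (Suc k))
                                    \<le> t * (\<mu> (b (Suc k)) - \<mu> (b (Suc k) - 1)))"

lemma jumps_dominate_eventually: "eventually (jumps_dominate z) at_top"
proof -
  have "eventually (\<lambda>t. block_fit z (b (Suc k) - 1) - block_fit z (b (Suc k))
                         \<le> t * (\<mu> (b (Suc k)) - \<mu> (b (Suc k) - 1))) at_top" if k: "k < K" for k
  proof -
    define g where "g = \<mu> (b (Suc k)) - \<mu> (b (Suc k) - 1)"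
    have g: "0 < g" using mu_jump[OF k] unfolding g_def by simp
    show ?thesis
      using eventually_ge_at_top[of "(block_fit z (b (Suc k) - 1) - block_fit z (b (Suc k))) / g"]
      by eventually_elim (use g in \<open>simp add: g_def pos_divide_le_eq\<close>)
  qed
  hence "eventually (\<lambda>t. \<forall>k\<in>{..<K}. block_fit z (b (Suc k) - 1) - block_fit z (b (Suc k))
                         \<le> t * (\<mu> (b (Suc k)) - \<mu> (b (Suc k) - 1))) at_top"
    by (intro eventually_ball_finite) auto
  thus ?thesis unfolding jumps_dominate_def .
qed

lemma block_fit_mono_cone:
  assumes dom: "jumps_dominate z t"
  shows "(\<lambda>i\<in>{..<N}. t * \<mu> i + block_fit z i) \<in> mono_cone N"
proof (rule mono_cone_restrict)
  fix i assume i: "Suc i < N"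
  obtain k where k: "k \<le> K" "b k \<le> i" "i < b (Suc k)" using block_of[of i] i by auto
  show "t * \<mu> i + block_fit z i \<le> t * \<mu> (Suc i) + block_fit z (Suc i)"
  proof (cases "Suc i < b (Suc k)")
    case True
    define j where "j = i - b k"
    have ij: "i = b k + j" and j: "Suc j < blen k" using k True unfolding j_def blen_def by auto
    have "block_fit z i \<le> block_fit z (Suc i)"
      using mono_coneD[OF block_eta_in j] block_fit_nth[OF k(1) j] block_fit_nth[OF k(1), of j] j
      unfolding ij by simp
    thus ?thesis using mu_flat[OF k(1,2) True] by simp
  next
    case False
    hence si: "Suc i = b (Suc k)" using k by simp
    hence "k < K" using b_last i k by (cases "k = K") auto
    with dom have "block_fit z (b (Suc k) - 1) - block_fit z (b (Suc k))
                     \<le> t * (\<mu> (b (Suc k)) - \<mu> (b (Suc k) - 1))"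
      unfolding jumps_dominate_def by blast
    moreover have "b (Suc k) - 1 = i" using si by simp
    ultimately show ?thesis using si by (simp add: algebra_simps)
  qed
qed

lemma loss_eventually_blockwise:
  "eventually (\<lambda>t. loss N (\<lambda>i. t * \<mu> i) z = block_loss z) at_top"
  using jumps_dominate_eventually[of z]
proof eventually_elim
  fix t assume dom: "jumps_dominate z t"
  have eta: "eta_mono N (\<lambda>i\<in>{..<N}. t * \<mu> i + z i) = (\<lambda>i\<in>{..<N}. t * \<mu> i + block_fit z i)"
    by (rule eta_eqI[OF block_fit_mono_cone[OF dom] block_fit_VI])
  have "loss N (\<lambda>i. t * \<mu> i) z = (\<Sum>i<N. (block_fit z i)^2)"
    unfolding loss_def sqdist_def eta by (rule sum.cong) auto
  also have "\<dots> = (\<Sum>k\<le>K. \<Sum>j<blen k. (block_eta k z j)^2)"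
    by (subst sum_blocks) (auto intro!: sum.cong simp: block_fit_nth)
  also have "\<dots> = block_loss z"
    unfolding block_loss_def by (simp add: loss_block_noise)
  finally show "loss N (\<lambda>i. t * \<mu> i) z = block_loss z" .
qed

text \<open>A block of a standard Gaussian vector is a standard Gaussian vector, so the
  mean of each blockwise loss is r(|J_k|).\<close>

lemma block_noise_measurable: "k \<le> K \<Longrightarrow> block_noise k \<in> measurable (gauss N) (gauss (blen k))"
  unfolding gauss_def block_noise_def
  by (rule measurable_restrict, rule measurable_component_singleton) (use in_block_N in auto)

lemma block_noise_distr:
  assumes k: "k \<le> K"
  shows "distr (gauss N) (gauss (blen k)) (block_noise k) = gauss (blen k)"
proof -
  have "distr (PiM {..<N} (\<lambda>_. gauss1)) (PiM {..<blen k} (\<lambda>i. (\<lambda>_. gauss1) (b k + i)))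
          (\<lambda>\<omega>. \<lambda>j\<in>{..<blen k}. \<omega> (b k + j))
      = PiM {..<blen k} (\<lambda>i. (\<lambda>_. gauss1) (b k + i))"
    using k by (intro distr_PiM_reindex) (auto simp: prob_space_gauss1 inj_on_def intro: in_block_N)
  thus ?thesis unfolding gauss_def block_noise_def by simp
qed

lemma block_loss_integral: "integral\<^sup>L (gauss N) block_loss = (\<Sum>k\<le>K. r0 (blen k))"
proof -
  have "integrable (gauss N) (\<lambda>z. loss (blen k) (\<lambda>_. 0) (block_noise k z))"
    and "integral\<^sup>L (gauss N) (\<lambda>z. loss (blen k) (\<lambda>_. 0) (block_noise k z)) = r0 (blen k)"
    if k: "k \<le> K" for k
    using integrable_distr_eq[OF block_noise_measurable[OF k] loss_measurable]
      integral_distr[OF block_noise_measurable[OF k] loss_measurable]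
      block_noise_distr[OF k] loss_integrable[of "blen k" "\<lambda>_. 0"]
    by (simp_all add: r0_def risk_loss)
  thus ?thesis unfolding block_loss_def by (subst Bochner_Integration.integral_sum) auto
qed

lemma risk_ray_limit: "((\<lambda>t. risk N (\<lambda>i. t * \<mu> i)) \<longlongrightarrow> (\<Sum>k\<le>K. r0 (blen k))) at_top"
proof -
  have "block_loss \<in> borel_measurable (gauss N)"
    unfolding block_loss_def
    by (intro borel_measurable_sum measurable_compose[OF block_noise_measurable loss_measurable]) auto
  hence "((\<lambda>t. integral\<^sup>L (gauss N) (loss N (\<lambda>i. t * \<mu> i))) \<longlongrightarrow> integral\<^sup>L (gauss N) block_loss) at_top"
  proof (rule integral_dominated_convergence_at_top[OF _ loss_measurable sumsq_integrable])
    show "AE z in gauss N. ((\<lambda>t. loss N (\<lambda>i. t * \<mu> i) z) \<longlongrightarrow> block_loss z) at_top"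
      by (intro AE_I2 tendsto_eventually loss_eventually_blockwise)
    show "\<forall>\<^sub>F t in at_top. AE z in gauss N. norm (loss N (\<lambda>i. t * \<mu> i) z) \<le> (\<Sum>i<N. (z i)^2)"
      using eventually_ge_at_top[of "0::real"]
    proof eventually_elim
      fix t :: real assume t: "0 \<le> t"
      have "\<And>i. Suc i < N \<Longrightarrow> t * \<mu> i \<le> t * \<mu> (Suc i)"
        using mu_mono t by (rule mult_left_mono)
      thus "AE z in gauss N. norm (loss N (\<lambda>i. t * \<mu> i) z) \<le> (\<Sum>i<N. (z i)^2)"
        using loss_le_noise loss_nonneg by (intro AE_I2) simp
    qed
  qed
  thus ?thesis unfolding risk_loss block_loss_integral .
qed

end


lemma Iplus_finite: "finite (Iplus N \<mu>)"
  by (rule finite_subset[of _ "{..N}"]) (auto simp: Iplus_def)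

lemma Iplus_range: "i \<in> Iplus N \<mu> \<Longrightarrow> 0 < i \<and> i < N"
  unfolding Iplus_def by auto

lemma length_breaks: "length (breaks N \<mu>) = Suc (Suc (card (Iplus N \<mu>)))"
  unfolding breaks_def by simp

lemma breaks_first: "breaks N \<mu> ! 0 = 0"
  unfolding breaks_def by simp

lemma breaks_last: "breaks N \<mu> ! Suc (card (Iplus N \<mu>)) = N"
  unfolding breaks_def by (simp add: nth_append)

lemma breaks_interior: "k < card (Iplus N \<mu>) \<Longrightarrow> breaks N \<mu> ! Suc k \<in> Iplus N \<mu>"
  unfolding breaks_def using Iplus_finite[of N \<mu>]
  by (simp add: nth_append) (metis length_sorted_list_of_set nth_mem set_sorted_list_of_set)

lemma set_breaks: "set (breaks N \<mu>) = {0, N} \<union> Iplus N \<mu>"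
  unfolding breaks_def using Iplus_finite[of N \<mu>] by auto

lemma breaks_sorted: "N \<ge> 1 \<Longrightarrow> sorted_wrt (<) (breaks N \<mu>)"
  unfolding breaks_def using Iplus_finite[of N \<mu>] Iplus_range[of _ N \<mu>]
  by (auto simp: sorted_wrt_append)

lemma sorted_wrt_less_index:
  fixes xs :: "'a::order list"
  assumes "sorted_wrt (<) xs" "i < length xs" "xs ! i < xs ! j"
  shows "i < j"
proof (rule ccontr)
  assume "\<not> i < j"
  hence "j < i \<or> j = i" by auto
  thus False using sorted_wrt_nth_less[OF assms(1), of j i] assms by auto
qed

lemma breaks_blocks:
  assumes N: "N \<ge> 1" and mu: "\<mu> \<in> mono_cone N"
  shows "blocks N \<mu> (card (Iplus N \<mu>)) (\<lambda>k. breaks N \<mu> ! k)"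
proof
  let ?b = "breaks N \<mu>" and ?K = "card (Iplus N \<mu>)"
  have sorted: "sorted_wrt (<) ?b" using N by (rule breaks_sorted)
  show "\<And>i. Suc i < N \<Longrightarrow> \<mu> i \<le> \<mu> (Suc i)" using mu by (rule mono_coneD)
  show "?b ! 0 = 0" by (rule breaks_first)
  show "?b ! Suc ?K = N" by (rule breaks_last)
  show "?b ! k < ?b ! Suc k" if "k \<le> ?K" for k
    using sorted_wrt_nth_less[OF sorted, of k "Suc k"] that by (simp add: length_breaks)
  show "\<And>k. k < ?K \<Longrightarrow> \<mu> (?b ! Suc k - 1) < \<mu> (?b ! Suc k)"
    using breaks_interior unfolding Iplus_def by auto
  show "\<mu> i = \<mu> (Suc i)" if k: "k \<le> ?K" and lo: "?b ! k \<le> i" and hi: "Suc i < ?b ! Suc k" for k i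
  proof (rule ccontr)
    assume ne: "\<mu> i \<noteq> \<mu> (Suc i)"
    have "?b ! Suc k \<in> set ?b" using k by (simp add: length_breaks)
    hence "Suc i < N" using hi Iplus_range[of "?b ! Suc k" N \<mu>] by (auto simp: set_breaks)
    hence "Suc i \<in> Iplus N \<mu>"
      using ne mono_coneD[OF mu] unfolding Iplus_def by (auto simp: order.order_iff_strict)
    then obtain m where m: "m < length ?b" "?b ! m = Suc i"
      by (metis set_breaks UnI2 in_set_conv_nth)
    have "k < m" using sorted_wrt_less_index[OF sorted, of k m] k lo m by (simp add: length_breaks)
    moreover have "m < Suc k" using sorted_wrt_less_index[OF sorted m(1), of "Suc k"] hi m by simp
    ultimately show False by simp
  qed
qed

theorem mainTheorem9:
  fixes N :: nat and \<mu> :: "nat \<Rightarrow> real"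
  assumes "N \<ge> 1" and "\<mu> \<in> mono_cone N"
  shows "mono_on {0..} (\<lambda>t::real. risk N (\<lambda>i. t * \<mu> i)) \<and>
         ((\<lambda>t::real. risk N (\<lambda>i. t * \<mu> i)) \<longlongrightarrow>
           (\<Sum>k\<le>card (Iplus N \<mu>). r0 (breaks N \<mu> ! Suc k - breaks N \<mu> ! k))) at_top"
proof
  show "mono_on {0..} (\<lambda>t::real. risk N (\<lambda>i. t * \<mu> i))"
    using mono_coneD[OF assms(2)] by (rule risk_ray_mono)
next
  interpret blocks N \<mu> "card (Iplus N \<mu>)" "\<lambda>k. breaks N \<mu> ! k"
    using assms by (rule breaks_blocks)
  show "((\<lambda>t::real. risk N (\<lambda>i. t * \<mu> i)) \<longlongrightarrow>
           (\<Sum>k\<le>card (Iplus N \<mu>). r0 (breaks N \<mu> ! Suc k - breaks N \<mu> ! k))) at_top"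
    using risk_ray_limit unfolding blen_def .
qed

end
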